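(* Let $d\ge2$ be an integer, $p\in(0,1]$, $\lambda\in(0,1)$, $b=1-(1-p)\lambda$, and let $\bar F$ be the solution of $\bar F'(w)=\lambda(p\bar F(w)^d+(1-p)\bar F(w))-\bar F(w)$, $\bar F(0)=\lambda$. Then $$\int_0^\infty\bar F(w)\,dw=\frac{\lambda}{b}\sum_{n=0}^\infty\frac1{1+n(d-1)}\left(\frac{p\lambda^d}{b}\right)^n.$$ In particular, for $d=2$, $\int_0^\infty\bar F(w)\,dw=-\frac{\log\left(1-\frac{p\lambda^2}{b}\right)}{p\lambda}$.
   Context: $\int_0^\infty\bar F(w)\,dw$ is the mean workload (equivalently the mean queue length) of a server under the LL($d,p$) policy. *)

theory Defs
  imports "HOL-Analysis.Analysis"
begin

end

theory Submission
  imports Defs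
begin

text \<open>With \<open>k = d - 1\<close> the equation reads \<open>F' = - F (b - p\<lambda> F\<^sup>k)\<close>, a Bernoulli equation:
  \<open>F\<^sup>-\<^sup>k\<close> satisfies a linear equation, so \<open>F\<close> stays in \<open>(0, \<lambda>]\<close> and decays to 0.
  The substitution \<open>u = F w\<close> therefore gives
  \<open>\<integral>\<^sub>0\<^sup>\<infinity> F = \<integral>\<^sub>0\<^sup>\<lambda> du / (b - p\<lambda> u\<^sup>k)\<close>, and expanding the integrand as a geometric series
  yields the claimed series; for \<open>k = 1\<close> it sums to a logarithm.\<close>

text \<open>\<open>geometric_primitive k q x = \<integral>\<^sub>0\<^sup>x dt / (1 - q t\<^sup>k)\<close>, integrated termwise.\<close>
definition geometric_primitive :: "nat \<Rightarrow> real \<Rightarrow> real \<Rightarrow> real" where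
  "geometric_primitive k q x = (\<Sum>n. q ^ n / (1 + real n * real k) * x ^ (n * k + 1))"

lemma
  fixes q x :: real
  assumes q: "\<bar>q\<bar> < 1" and x: "\<bar>x\<bar> < 1"
  shows summable_geometric_primitive:
      "summable (\<lambda>n. q ^ n / (1 + real n * real k) * x ^ (n * k + 1))"
    and has_field_derivative_geometric_primitive:
      "(geometric_primitive k q has_field_derivative 1 / (1 - q * x ^ k)) (at x)"
proof -
  define S where "S = {-1<..<(1::real)}"
  have term_deriv: "((\<lambda>x. q ^ n / (1 + real n * real k) * x ^ (n * k + 1))
      has_field_derivative (q * y ^ k) ^ n) (at y within S)" for n y
  proof -
    have "1 + real n * real k > 0" by (simp add: add_pos_nonneg)
    show ?thesis
      by (rule derivative_eq_intros refl)+
        (use \<open>1 + real n * real k > 0\<close> in \<open>simp add: field_simps power_mult power_mult_distrib\<close>)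
  qed
  have bound: "\<bar>q * y ^ k\<bar> \<le> \<bar>q\<bar>" if "\<bar>y\<bar> \<le> 1" for y
    using that by (simp add: abs_mult power_abs mult_left_le power_le_one)
  have "uniformly_convergent_on S (\<lambda>n y. \<Sum>i<n. (q * y ^ k) ^ i)"
  proof (rule Weierstrass_m_test'_ev[where M = "\<lambda>n. \<bar>q\<bar> ^ n"])
    show "\<forall>\<^sub>F n in sequentially. \<forall>y\<in>S. norm ((q * y ^ k) ^ n) \<le> \<bar>q\<bar> ^ n"
      using bound by (intro always_eventually) (auto simp: S_def power_abs intro!: power_mono)
    show "summable (\<lambda>n. \<bar>q\<bar> ^ n)" using q by simp
  qed
  from has_field_derivative_series'[OF _ term_deriv this, of 0 x]
  have series: "summable (\<lambda>n. q ^ n / (1 + real n * real k) * x ^ (n * k + 1))"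
    "(geometric_primitive k q has_field_derivative (\<Sum>n. (q * x ^ k) ^ n)) (at x)"
    using x by (auto simp: S_def abs_less_iff geometric_primitive_def[abs_def])
  then show "summable (\<lambda>n. q ^ n / (1 + real n * real k) * x ^ (n * k + 1))" by simp
  have "\<bar>q * x ^ k\<bar> < 1" using bound[of x] q x by simp
  then have "(\<Sum>n. (q * x ^ k) ^ n) = 1 / (1 - q * x ^ k)" by (simp add: suminf_geometric)
  with series show "(geometric_primitive k q has_field_derivative 1 / (1 - q * x ^ k)) (at x)"
    by simp
qed

lemma geometric_primitive_zero [simp]: "geometric_primitive k q 0 = 0"
  by (simp add: geometric_primitive_def)

lemma geometric_primitive_eq_suminf:
  fixes q x :: real
  assumes q: "\<bar>q\<bar> < 1" and x: "\<bar>x\<bar> < 1"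
  shows "geometric_primitive k q x = x * (\<Sum>n. 1 / (1 + real n * real k) * (q * x ^ k) ^ n)"
proof -
  have bound: "norm (1 / (1 + real n * real k) * (q * x ^ k) ^ n) \<le> \<bar>q\<bar> ^ n" for n
  proof -
    have "\<bar>q * x ^ k\<bar> ^ n \<le> \<bar>q\<bar> ^ n"
      using x by (intro power_mono) (simp_all add: abs_mult power_abs mult_left_le power_le_one)
    moreover have "1 / (1 + real n * real k) \<le> 1" by (simp add: divide_le_eq_1 add_pos_nonneg)
    ultimately have "1 / (1 + real n * real k) * \<bar>q * x ^ k\<bar> ^ n \<le> 1 * \<bar>q\<bar> ^ n"
      by (intro mult_mono) simp_all
    then show ?thesis by (simp add: abs_mult power_abs)
  qed
  have "summable (\<lambda>n. \<bar>q\<bar> ^ n)" using q by simp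
  then have "summable (\<lambda>n. 1 / (1 + real n * real k) * (q * x ^ k) ^ n)"
    using bound by (rule summable_comparison_test')
  moreover have "q ^ n / (1 + real n * real k) * x ^ (n * k + 1)
      = x * (1 / (1 + real n * real k) * (q * x ^ k) ^ n)" for n
    by (simp add: power_mult_distrib power_mult[symmetric] mult.commute[of k])
  ultimately show ?thesis
    unfolding geometric_primitive_def by (simp only: suminf_mult)
qed

lemma geometric_primitive_one:
  fixes q x :: real
  assumes q: "\<bar>q\<bar> < 1" and x: "\<bar>x\<bar> < 1"
  shows "q * geometric_primitive 1 q x = - ln (1 - q * x)"
proof -
  let ?f = "\<lambda>n. q ^ n / (1 + real n * real 1) * x ^ (n * 1 + 1)"
  have "\<bar>q * x\<bar> < 1" using q x by (metis abs_mult abs_mult_less mult_1_left)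
  then have "ln (1 - q * x) = (\<Sum>n. (-1) ^ n * (1 / real (n + 1)) * (- (q * x)) ^ Suc n)"
    by (subst ln_series) auto
  also have "\<dots> = (\<Sum>n. - (q * ?f n))"
    by (simp add: power_minus' algebra_simps)
  also have "\<dots> = - (q * geometric_primitive 1 q x)"
    using summable_geometric_primitive[OF q x, of 1] unfolding geometric_primitive_def
    by (simp only: suminf_minus summable_mult suminf_mult)
  finally show ?thesis by simp
qed

lemma linear_ode_solution:
  fixes F g :: "real \<Rightarrow> real"
  assumes g: "continuous_on {0..} g"
    and F': "\<And>w. w \<ge> 0 \<Longrightarrow> (F has_real_derivative F w * g w) (at w within {0..})"
    and T: "T \<ge> 0"
  shows "F T = F 0 * exp (integral {0..T} g)"
proof -
  define H where "H w = F w * exp (- integral {0..w} g)" for w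
  have "(H has_real_derivative 0) (at w within {0..T})" if w: "w \<in> {0..T}" for w
  proof -
    have "(F has_real_derivative F w * g w) (at w within {0..T})"
      using w by (intro DERIV_subset[OF F']) auto
    moreover have "((\<lambda>w. integral {0..w} g) has_real_derivative g w) (at w within {0..T})"
      using continuous_on_subset[OF g] w by (intro integral_has_real_derivative) auto
    ultimately show ?thesis
      unfolding H_def by (auto intro!: derivative_eq_intros)
  qed
  then obtain c where "\<forall>w\<in>{0..T}. H w = c"
    using has_field_derivative_zero_constant[of "{0..T}" H] by auto
  then have "H T = H 0" using T by auto
  then show ?thesis by (simp add: H_def exp_minus field_simps)
qed

lemma has_integral_atLeast_of_antiderivative:
  fixes f A :: "real \<Rightarrow> real"
  assumes A': "\<And>x. x \<ge> a \<Longrightarrow> (A has_real_derivative f x) (at x within {a..})"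
    and nonneg: "\<And>x. x \<ge> a \<Longrightarrow> f x \<ge> 0"
    and lim: "(A \<longlongrightarrow> L) at_top"
  shows "(f has_integral (L - A a)) {a..}"
proof -
  have int: "(f has_integral (A y - A a)) {a..y}" if "y \<ge> a" for y
    using that by (intro fundamental_theorem_of_calculus)
      (auto simp: has_real_derivative_iff_has_vector_derivative[symmetric] intro!: DERIV_subset[OF A'])
  show ?thesis
  proof (rule has_integral_to_inf)
    show "f integrable_on {a..y}" for y
      using int by (cases "y \<ge> a") auto
    have "((\<lambda>y. A y - A a) \<longlongrightarrow> L - A a) at_top"
      using lim by (intro tendsto_intros)
    moreover have "\<forall>\<^sub>F y in at_top. A y - A a = integral {a..y} f"
      using int by (intro eventually_at_top_linorderI[of a]) (metis integral_unique)
    ultimately show "((\<lambda>y. integral {a..y} f) \<longlongrightarrow> L - A a) at_top"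
      by (rule Lim_transform_eventually)
  qed (use nonneg in auto)
qed

locale bernoulli_decay =
  fixes k :: nat and a b lam :: real and F :: "real \<Rightarrow> real"
  assumes k_pos: "0 < k" and a_nonneg: "0 \<le> a" and a_less_b: "a < b"
    and lam_pos: "0 < lam" and lam_less_1: "lam < 1" and F_0: "F 0 = lam"
    and ode: "\<And>w. 0 \<le> w \<Longrightarrow>
      (F has_real_derivative - F w * (b - a * F w ^ k)) (at w within {0..})"
begin

lemma b_pos: "0 < b"
  using a_nonneg a_less_b by linarith

lemma continuous_on_F: "continuous_on {0..} F"
  using ode by (auto simp: continuous_on_eq_continuous_within intro: DERIV_continuous)

lemma F_pos:
  assumes "0 \<le> w" shows "0 < F w"
proof -
  have "continuous_on {0..} (\<lambda>w. a * F w ^ k - b)"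
    by (intro continuous_intros continuous_on_F)
  moreover have "(F has_real_derivative F w * (a * F w ^ k - b)) (at w within {0..})"
    if "0 \<le> w" for w
    using ode[OF that] by (simp add: algebra_simps)
  ultimately have "F w = F 0 * exp (integral {0..w} (\<lambda>w. a * F w ^ k - b))"
    by (rule linear_ode_solution[OF _ _ assms])
  then show ?thesis using lam_pos by (simp add: F_0)
qed

lemma has_real_derivative_F_power:
  assumes "0 \<le> w"
  shows "((\<lambda>w. F w ^ k) has_real_derivative - (k * (b - a * F w ^ k) * F w ^ k)) (at w within {0..})"
proof -
  have "k * (- F w * (b - a * F w ^ k) * F w ^ (k - Suc 0))
      = - (k * (b - a * F w ^ k) * (F w * F w ^ (k - Suc 0)))"
    by (simp add: algebra_simps)
  also have "F w * F w ^ (k - Suc 0) = F w ^ k"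
    using k_pos by (metis Suc_pred power_Suc)
  finally show ?thesis
    by (rule DERIV_cong[OF DERIV_power[OF ode[OF assms]]])
qed

text \<open>The substitution \<open>u = F\<^sup>-\<^sup>k\<close> turns the Bernoulli equation into the linear equation
  \<open>u' = k (b u - a)\<close>.\<close>
lemma has_real_derivative_inverse_F_power:
  assumes "0 \<le> w"
  shows "((\<lambda>w. inverse (F w ^ k) - a / b) has_real_derivative (inverse (F w ^ k) - a / b) * (k * b))
    (at w within {0..})"
proof -
  have "F w ^ k \<noteq> 0" using F_pos[OF assms] by simp
  from DERIV_diff[OF DERIV_inverse_fun[OF has_real_derivative_F_power[OF assms] this]
      DERIV_const[of "a / b"]]
  show ?thesis
    by (rule DERIV_cong) (use \<open>F w ^ k \<noteq> 0\<close> b_pos in \<open>simp add: field_simps power2_eq_square\<close>)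
qed

lemma inverse_F_power:
  assumes "0 \<le> w"
  shows "inverse (F w ^ k) = a / b + (inverse (lam ^ k) - a / b) * exp (k * b * w)"
proof -
  have "inverse (F w ^ k) - a / b
      = (inverse (F 0 ^ k) - a / b) * exp (integral {0..w} (\<lambda>_. k * b))"
    by (rule linear_ode_solution[OF continuous_on_const has_real_derivative_inverse_F_power assms])
  then show ?thesis using assms by (simp add: F_0 algebra_simps)
qed

lemma a_div_b: "0 \<le> a / b" "a / b < 1"
  using a_nonneg a_less_b b_pos by simp_all

lemma a_div_b_less_inverse_lam_power: "a / b < inverse (lam ^ k)"
proof -
  have "1 \<le> inverse (lam ^ k)"
    using lam_pos lam_less_1 by (simp add: power_le_one one_le_inverse)
  then show ?thesis using a_div_b by linarith
qed

lemma F_le_lam: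
  assumes "0 \<le> w" shows "F w \<le> lam"
proof -
  have "0 \<le> (inverse (lam ^ k) - a / b) * (exp (k * b * w) - 1)"
    using a_div_b_less_inverse_lam_power assms b_pos by simp
  then have "inverse (lam ^ k) \<le> inverse (F w ^ k)"
    using inverse_F_power[OF assms] by (simp add: algebra_simps)
  then have "F w ^ k \<le> lam ^ k"
    using F_pos[OF assms] lam_pos by (simp add: inverse_le_iff_le)
  then show ?thesis
    using F_pos[OF assms] lam_pos k_pos by simp
qed

lemma F_tendsto_0: "(F \<longlongrightarrow> 0) at_top"
proof -
  have "filterlim (\<lambda>w. a / b + (inverse (lam ^ k) - a / b) * exp (k * b * w)) at_top at_top"
    using a_div_b_less_inverse_lam_power k_pos b_pos
    by (intro filterlim_tendsto_add_at_top[OF tendsto_const]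
        filterlim_tendsto_pos_mult_at_top[OF tendsto_const]
        filterlim_compose[OF exp_at_top] filterlim_tendsto_pos_mult_at_top[OF tendsto_const]
        filterlim_ident) auto
  then have "filterlim (\<lambda>w. inverse (F w ^ k)) at_top at_top"
    by (rule filterlim_cong[THEN iffD1, OF refl refl, rotated])
      (auto intro: eventually_at_top_linorderI[of 0] simp: inverse_F_power)
  then have "((\<lambda>w. inverse (inverse (F w ^ k))) \<longlongrightarrow> 0) at_top"
    by (rule tendsto_inverse_0_at_top)
  then have "((\<lambda>w. root k (F w ^ k)) \<longlongrightarrow> root k 0) at_top"
    by (intro tendsto_real_root) simp
  moreover have "\<forall>\<^sub>F w in at_top. root k (F w ^ k) = F w"
    using F_pos k_pos
    by (intro eventually_at_top_linorderI[of 0]) (simp add: real_root_power_cancel less_imp_le)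
  ultimately show ?thesis by (simp add: tendsto_cong)
qed

lemma has_integral_F: "(F has_integral geometric_primitive k (a / b) lam / b) {0..}"
proof -
  define A where "A w = - geometric_primitive k (a / b) (F w) / b" for w
  have "(A has_real_derivative F w) (at w within {0..})" if w: "0 \<le> w" for w
  proof -
    have F_w: "0 < F w" "F w < 1" using F_pos[OF w] F_le_lam[OF w] lam_less_1 by auto
    then have "a * F w ^ k \<le> a"
      using a_nonneg by (simp add: mult_left_le power_le_one)
    then have denom: "b * (1 - a / b * F w ^ k) = b - a * F w ^ k" "0 < b - a * F w ^ k"
      using b_pos a_less_b by (auto simp: field_simps)
    have "((\<lambda>w. geometric_primitive k (a / b) (F w)) has_real_derivative
        1 / (1 - a / b * F w ^ k) * (- F w * (b - a * F w ^ k))) (at w within {0..})"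
      by (rule DERIV_chain2[OF has_field_derivative_geometric_primitive ode[OF w]])
        (use a_div_b F_w in auto)
    from DERIV_cdivide[OF DERIV_minus[OF this], of b] show ?thesis
      unfolding A_def by (rule DERIV_cong) (use denom in \<open>simp add: mult.commute[of _ b]\<close>)
  qed
  moreover have "(A \<longlongrightarrow> - geometric_primitive k (a / b) 0 / b) at_top"
    unfolding A_def using a_nonneg a_less_b
    by (intro tendsto_intros isCont_tendsto_compose[OF _ F_tendsto_0]
        DERIV_isCont[OF has_field_derivative_geometric_primitive]) auto
  ultimately have "(F has_integral (0 - A 0)) {0..}"
    using F_pos by (intro has_integral_atLeast_of_antiderivative) (auto simp: less_imp_le)
  then show ?thesis by (simp add: A_def F_0)
qed

end

theorem proposition4p7:
  fixes d :: nat and p lam b :: real and F :: "real \<Rightarrow> real"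
  assumes hd: "d \<ge> 2"
    and hp: "0 < p" "p \<le> 1"
    and hlam: "0 < lam" "lam < 1"
    and hb: "b = 1 - (1 - p) * lam"
    and hF0: "F 0 = lam"
    and hODE: "\<And>w. w \<ge> 0 \<Longrightarrow>
       (F has_real_derivative (lam * (p * F w ^ d + (1 - p) * F w) - F w)) (at w within {0..})"
  shows "(F has_integral
            (lam / b * (\<Sum>n. 1 / (1 + real n * (real d - 1)) * (p * lam ^ d / b) ^ n))) {0..}
         \<and> (d = 2 \<longrightarrow> integral {0..} F = - ln (1 - p * lam\<^sup>2 / b) / (p * lam))"
proof -
  obtain k where d: "d = Suc k" and k: "0 < k"
    using hd by (cases d) auto
  interpret bernoulli_decay k "p * lam" b lam F
  proof
    fix w :: real assume "0 \<le> w"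
    from hODE[OF this]
    show "(F has_real_derivative - F w * (b - p * lam * F w ^ k)) (at w within {0..})"
      by (rule DERIV_cong) (simp add: hb d algebra_simps)
  qed (use k hp hlam hF0 in \<open>auto simp: hb algebra_simps\<close>)
  have q: "\<bar>p * lam / b\<bar> < 1" and lam: "\<bar>lam\<bar> < 1"
    using a_div_b hlam by auto
  have "geometric_primitive k (p * lam / b) lam / b
      = lam / b * (\<Sum>n. 1 / (1 + real n * (real d - 1)) * (p * lam ^ d / b) ^ n)"
    unfolding geometric_primitive_eq_suminf[OF q lam] by (simp add: d mult_ac)
  moreover have "geometric_primitive k (p * lam / b) lam / b = - ln (1 - p * lam\<^sup>2 / b) / (p * lam)"
    if "d = 2"
    using geometric_primitive_one[OF q lam] that hp hlam b_pos
    by (simp add: d power2_eq_square field_simps)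
  ultimately show ?thesis
    using has_integral_F integral_unique by auto
qed

end
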